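(* Let $(X,d)$ be a locally compact, geodesically complete CAT(0)-space connected at infinity, and let $d'$ be a metric on $X$ such that $(X,d')$ is a locally compact geodesically complete CAT(0)-space and, for all $x,y\in X$, $d(x,y)\le 1\iff d'(x,y)\le 1$. Then for every $n\in\mathbb N$ and all $x,y\in X$: $d(x,y)\le n\iff d'(x,y)\le n$, $d(x,y)=n\iff d'(x,y)=n$, and $d(x,y)<n\iff d'(x,y)<n$.
   Context: Geodesically complete: geodesic, and every geodesic segment lies in a complete geodesic. Connected at infinity: the complement of every metric ball is path connected. *)

theory Defs
  imports "HOL-Analysis.Analysis"
begin

text \<open>Metric notions for a distance function d on a carrier M (abstract metric spaces,
so that two different metrics on the same set can be handled).\<close>

definition geodesic_from :: "'a set \<Rightarrow> ('a \<Rightarrow> 'a \<Rightarrow> real) \<Rightarrow> (real \<Rightarrow> 'a) \<Rightarrow> 'a \<Rightarrow> 'a \<Rightarrow> bool" where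
  "geodesic_from M d g p q \<longleftrightarrow>
     g 0 = p \<and> g (d p q) = q \<and> g ` {0..d p q} \<subseteq> M \<and>
     (\<forall>s\<in>{0..d p q}. \<forall>t\<in>{0..d p q}. d (g s) (g t) = \<bar>s - t\<bar>)"

definition geodesic_metric :: "'a set \<Rightarrow> ('a \<Rightarrow> 'a \<Rightarrow> real) \<Rightarrow> bool" where
  "geodesic_metric M d \<longleftrightarrow> (\<forall>p\<in>M. \<forall>q\<in>M. \<exists>g. geodesic_from M d g p q)"

text \<open>Points of a side of a geodesic triangle paired with their comparison points
on the corresponding side [P,Q] of a comparison triangle in the Euclidean plane.\<close>
definition cmp_side :: "(real \<Rightarrow> 'a) \<Rightarrow> real \<Rightarrow> complex \<Rightarrow> complex \<Rightarrow> ('a \<times> complex) set" where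
  "cmp_side g L P Q = {(g s, P + of_real (s / L) * (Q - P)) | s. s \<in> {0..L}}"

definition CAT0 :: "'a set \<Rightarrow> ('a \<Rightarrow> 'a \<Rightarrow> real) \<Rightarrow> bool" where
  "CAT0 M d \<longleftrightarrow> geodesic_metric M d \<and>
     (\<forall>p\<in>M. \<forall>q\<in>M. \<forall>r\<in>M. \<forall>g1 g2 g3.
        geodesic_from M d g1 p q \<and> geodesic_from M d g2 q r \<and> geodesic_from M d g3 r p \<longrightarrow>
        (\<forall>P Q R :: complex. cmod (P - Q) = d p q \<and> cmod (Q - R) = d q r \<and> cmod (R - P) = d r p \<longrightarrow>
          (let S = cmp_side g1 (d p q) P Q \<union> cmp_side g2 (d q r) Q R \<union> cmp_side g3 (d r p) R P
           in \<forall>(x, x') \<in> S. \<forall>(y, y') \<in> S. d x y \<le> cmod (x' - y'))))"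

definition geodesically_complete :: "'a set \<Rightarrow> ('a \<Rightarrow> 'a \<Rightarrow> real) \<Rightarrow> bool" where
  "geodesically_complete M d \<longleftrightarrow> geodesic_metric M d \<and>
     (\<forall>g a b. a < b \<and> g ` {a..b} \<subseteq> M \<and> (\<forall>s\<in>{a..b}. \<forall>t\<in>{a..b}. d (g s) (g t) = \<bar>s - t\<bar>) \<longrightarrow>
        (\<exists>h. range h \<subseteq> M \<and> (\<forall>s t. d (h s) (h t) = \<bar>s - t\<bar>) \<and> (\<forall>s\<in>{a..b}. h s = g s)))"

definition connected_at_infinity :: "'a set \<Rightarrow> ('a \<Rightarrow> 'a \<Rightarrow> real) \<Rightarrow> bool" where
  "connected_at_infinity M d \<longleftrightarrow>
     (\<forall>x\<in>M. \<forall>r. path_connectedin (Metric_space.mtopology M d) (M - Metric_space.mball M d x r))"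

end

theory Submission
  imports Defs
begin

text \<open>In a geodesic space the closed ball of radius \<open>a + b\<close> is the closed \<open>a\<close>-neighbourhood
of the closed ball of radius \<open>b\<close>, so the unit closed balls determine all closed balls of integer
radius, and together with the unit spheres also all open ones. The unit spheres are reached
through radius 2: in a CAT(0) space two points at distance 2 have exactly one point within
distance 1 of both (their midpoint), whereas in a geodesic space two points at distance strictly
between 0 and 2 have a whole segment of such points; so \<open>d\<close>-distance 2 forces \<open>d'\<close>-distance 2.
A \<open>d\<close>-segment of length 1 extends, by geodesic completeness, to one of length 2, whose
\<open>d'\<close>-length is therefore 2, and the triangle inequality forces the first piece to have
\<open>d'\<close>-length 1.\<close>

lemma geodesic_obtain_point_between:
  assumes "geodesic_metric M d" "x \<in> M" "y \<in> M" "0 \<le> u" "u \<le> d x y"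
  obtains z where "z \<in> M" "d x z = u" "d z y = d x y - u"
proof -
  obtain g where g: "geodesic_from M d g x y"
    using assms(1-3) unfolding geodesic_metric_def by blast
  then have "g 0 = x" "g (d x y) = y"
    and iso: "\<forall>s\<in>{0..d x y}. \<forall>t\<in>{0..d x y}. d (g s) (g t) = \<bar>s - t\<bar>"
    and "g u \<in> M"
    using assms(4,5) unfolding geodesic_from_def by auto
  moreover have "d (g 0) (g u) = u" "d (g u) (g (d x y)) = d x y - u"
    using iso assms(4,5) by auto
  ultimately show thesis
    using that by simp
qed

context Metric_space
begin

lemma geodesic_le_add_iff:
  assumes "geodesic_metric M d" "x \<in> M" "y \<in> M" "0 \<le> a" "0 \<le> b"
  shows "d x y \<le> a + b \<longleftrightarrow> (\<exists>z\<in>M. d x z \<le> a \<and> d z y \<le> b)"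
proof
  assume le: "d x y \<le> a + b"
  show "\<exists>z\<in>M. d x z \<le> a \<and> d z y \<le> b"
  proof (cases "d x y \<le> b")
    case True
    then show ?thesis using assms by (intro bexI[of _ x]) auto
  next
    case False
    with assms le obtain z where "z \<in> M" "d x z = d x y - b" "d z y = b"
      by (elim geodesic_obtain_point_between[of M d x y "d x y - b"]) auto
    then show ?thesis using le by (intro bexI[of _ z]) auto
  qed
qed (use assms triangle in force)

lemma geodesic_less_add_iff:
  assumes "geodesic_metric M d" "x \<in> M" "y \<in> M" "0 < a" "0 \<le> b"
  shows "d x y < a + b \<longleftrightarrow> (\<exists>z\<in>M. d x z < a \<and> d z y \<le> b)"
proof
  assume less: "d x y < a + b"
  show "\<exists>z\<in>M. d x z < a \<and> d z y \<le> b"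
  proof (cases "d x y \<le> b")
    case True
    then show ?thesis using assms by (intro bexI[of _ x]) auto
  next
    case False
    with assms less obtain z where "z \<in> M" "d x z = d x y - b" "d z y = b"
      by (elim geodesic_obtain_point_between[of M d x y "d x y - b"]) auto
    then show ?thesis using less by (intro bexI[of _ z]) auto
  qed
next
  assume "\<exists>z\<in>M. d x z < a \<and> d z y \<le> b"
  then show "d x y < a + b"
    using assms triangle by force
qed

end

lemma geodesic_two_points_in_unit_balls:
  assumes "geodesic_metric M d" "x \<in> M" "y \<in> M" "0 < d x y" "d x y < 2"
  obtains z w where "z \<in> M" "w \<in> M" "z \<noteq> w"
    "d x z \<le> 1" "d z y \<le> 1" "d x w \<le> 1" "d w y \<le> 1"
proof -
  \<comment> \<open>the admissible distances from \<open>x\<close> along a geodesic form the interval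
      \<open>[max 0 (d x y - 1), min 1 (d x y)]\<close>, which is nondegenerate since \<open>0 < d x y < 2\<close>\<close>
  obtain z where z: "z \<in> M" "d x z = max 0 (d x y - 1)" "d z y = d x y - max 0 (d x y - 1)"
    using assms by (elim geodesic_obtain_point_between[of M d x y "max 0 (d x y - 1)"]) auto
  obtain w where w: "w \<in> M" "d x w = min 1 (d x y)" "d w y = d x y - min 1 (d x y)"
    using assms by (elim geodesic_obtain_point_between[of M d x y "min 1 (d x y)"]) auto
  have "z \<noteq> w"
    using z w assms(4,5) by auto
  with z w assms(5) show thesis
    by (intro that) auto
qed

lemma CAT0_imp_geodesic_metric: "CAT0 M d \<Longrightarrow> geodesic_metric M d"
  by (simp add: CAT0_def)

lemma CAT0_between_on_geodesic:
  assumes M: "Metric_space M d" and C: "CAT0 M d" and g: "geodesic_from M d g x y"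
    and in_M: "x \<in> M" "y \<in> M" "z \<in> M" and between: "d x z + d z y = d x y"
  shows "z = g (d x z)"
proof -
  interpret Metric_space M d by (fact M)
  obtain g2 g3 where g2: "geodesic_from M d g2 y z" and g3: "geodesic_from M d g3 z x"
    using CAT0_imp_geodesic_metric[OF C] in_M unfolding geodesic_metric_def by meson
  \<comment> \<open>the comparison triangle is degenerate, with \<open>R\<close> on the segment \<open>[P, Q]\<close>, so \<open>z\<close> and
      \<open>g (d x z)\<close> share the comparison point \<open>R\<close>\<close>
  define P Q R :: complex where "P = 0" "Q = of_real (d x y)" "R = of_real (d x z)"
  have sides: "cmod (P - Q) = d x y" "cmod (Q - R) = d y z" "cmod (R - P) = d z x"
    unfolding P_Q_R_def commute[of y z] commute[of z x]
    by (simp, simp flip: of_real_diff between, simp)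
  have on_segment: "d x z \<in> {0..d x y}"
    by (simp flip: between)
  define S where "S = cmp_side g (d x y) P Q \<union> cmp_side g2 (d y z) Q R \<union> cmp_side g3 (d z x) R P"
  have comparison: "\<forall>(a, a') \<in> S. \<forall>(b, b') \<in> S. d a b \<le> cmod (a' - b')"
    using C in_M g g2 g3 sides unfolding CAT0_def S_def Let_def by blast
  have "(g (d x z), R) \<in> S"
  proof -
    have scale: "d x z / d x y * d x y = d x z"
    proof (cases "d x y = 0")
      case True
      then show ?thesis using on_segment by simp
    qed simp
    have "P + of_real (d x z / d x y) * (Q - P) = R"
      unfolding P_Q_R_def by (simp only: add_0 diff_zero scale flip: of_real_mult)
    with on_segment show ?thesis
      unfolding S_def cmp_side_def by blast
  qed
  moreover have "(z, R) \<in> S"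
  proof -
    have "Q + of_real (d y z / d y z) * (R - Q) = R"
      using between commute[of y z] unfolding P_Q_R_def by (cases "d y z = 0") auto
    moreover have "g2 (d y z) = z" using g2 unfolding geodesic_from_def by auto
    moreover have "(g2 (d y z), Q + of_real (d y z / d y z) * (R - Q)) \<in> cmp_side g2 (d y z) Q R"
      unfolding cmp_side_def by auto
    ultimately show ?thesis
      unfolding S_def by auto
  qed
  ultimately have "d (g (d x z)) z \<le> cmod (R - R)"
    using comparison by blast
  moreover have "g (d x z) \<in> M"
    using g on_segment unfolding geodesic_from_def by auto
  ultimately show ?thesis
    using in_M nonneg[of "g (d x z)" z] by auto
qed

lemma CAT0_between_unique:
  assumes "Metric_space M d" "CAT0 M d" "x \<in> M" "y \<in> M" "z \<in> M" "w \<in> M"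
    and "d x z + d z y = d x y" "d x w + d w y = d x y" "d x z = d x w"
  shows "z = w"
proof -
  obtain g where "geodesic_from M d g x y"
    using CAT0_imp_geodesic_metric[OF assms(2)] assms(3,4) unfolding geodesic_metric_def by blast
  then show ?thesis
    using CAT0_between_on_geodesic assms by metis
qed

lemma geodesically_complete_extend:
  assumes "geodesically_complete M d" "x \<in> M" "y \<in> M" "0 < d x y" "d x y \<le> r"
  obtains w where "w \<in> M" "d x w = r" "d y w = r - d x y"
proof -
  obtain g where g: "geodesic_from M d g x y"
    using assms(1-3) unfolding geodesically_complete_def geodesic_metric_def by blast
  then obtain h where h: "range h \<subseteq> M" "\<forall>s t. d (h s) (h t) = \<bar>s - t\<bar>"
    and agree: "\<forall>s\<in>{0..d x y}. h s = g s"
    using assms(1,4) unfolding geodesically_complete_def geodesic_from_def by blast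
  have "h 0 = x" "h (d x y) = y"
    using agree g assms(4) unfolding geodesic_from_def by auto
  then have "d x (h r) = r" "d y (h r) = r - d x y"
    using h(2)[rule_format, of 0 r] h(2)[rule_format, of "d x y" r] assms(4,5) by auto
  with h(1) show thesis
    by (intro that[of "h r"]) auto
qed

definition same_closed_balls :: "'a set \<Rightarrow> ('a \<Rightarrow> 'a \<Rightarrow> real) \<Rightarrow> ('a \<Rightarrow> 'a \<Rightarrow> real) \<Rightarrow> real \<Rightarrow> bool" where
  "same_closed_balls M d d' r \<longleftrightarrow> (\<forall>x\<in>M. \<forall>y\<in>M. d x y \<le> r \<longleftrightarrow> d' x y \<le> r)"

definition same_open_balls :: "'a set \<Rightarrow> ('a \<Rightarrow> 'a \<Rightarrow> real) \<Rightarrow> ('a \<Rightarrow> 'a \<Rightarrow> real) \<Rightarrow> real \<Rightarrow> bool" where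
  "same_open_balls M d d' r \<longleftrightarrow> (\<forall>x\<in>M. \<forall>y\<in>M. d x y < r \<longleftrightarrow> d' x y < r)"

definition same_spheres :: "'a set \<Rightarrow> ('a \<Rightarrow> 'a \<Rightarrow> real) \<Rightarrow> ('a \<Rightarrow> 'a \<Rightarrow> real) \<Rightarrow> real \<Rightarrow> bool" where
  "same_spheres M d d' r \<longleftrightarrow> (\<forall>x\<in>M. \<forall>y\<in>M. d x y = r \<longleftrightarrow> d' x y = r)"

lemma same_closed_balls_sym: "same_closed_balls M d d' r \<longleftrightarrow> same_closed_balls M d' d r"
  unfolding same_closed_balls_def by blast

lemma same_open_balls_if_same_spheres:
  "same_closed_balls M d d' r \<Longrightarrow> same_spheres M d d' r \<Longrightarrow> same_open_balls M d d' r"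
  unfolding same_closed_balls_def same_open_balls_def same_spheres_def by (auto simp: less_le)

lemma same_spheres_if_same_balls:
  "same_closed_balls M d d' r \<Longrightarrow> same_open_balls M d d' r \<Longrightarrow> same_spheres M d d' r"
  unfolding same_closed_balls_def same_open_balls_def same_spheres_def by (auto simp: less_le)

lemma same_closed_balls_add:
  assumes "Metric_space M d" "geodesic_metric M d" "Metric_space M d'" "geodesic_metric M d'"
    and "0 \<le> a" "0 \<le> b" "same_closed_balls M d d' a" "same_closed_balls M d d' b"
  shows "same_closed_balls M d d' (a + b)"
  using assms Metric_space.geodesic_le_add_iff[OF assms(1,2)] Metric_space.geodesic_le_add_iff[OF assms(3,4)]
  unfolding same_closed_balls_def by meson

lemma same_open_balls_add:
  assumes "Metric_space M d" "geodesic_metric M d" "Metric_space M d'" "geodesic_metric M d'"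
    and "0 < a" "0 \<le> b" "same_open_balls M d d' a" "same_closed_balls M d d' b"
  shows "same_open_balls M d d' (a + b)"
  using assms Metric_space.geodesic_less_add_iff[OF assms(1,2)] Metric_space.geodesic_less_add_iff[OF assms(3,4)]
  unfolding same_closed_balls_def same_open_balls_def by meson

lemma same_closed_balls_nat:
  assumes "Metric_space M d" "geodesic_metric M d" "Metric_space M d'" "geodesic_metric M d'"
    and "same_closed_balls M d d' 1"
  shows "same_closed_balls M d d' (real n)"
proof (induction n)
  case 0
  show ?case
    using Metric_space.zero[OF assms(1)] Metric_space.zero[OF assms(3)]
      Metric_space.nonneg[OF assms(1)] Metric_space.nonneg[OF assms(3)]
    unfolding same_closed_balls_def by (metis of_nat_0 order.antisym order_refl)
next
  case (Suc n)
  then show ?case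
    using same_closed_balls_add[OF assms(1-4) _ _ assms(5)] by simp
qed

lemma same_open_balls_nat:
  assumes "Metric_space M d" "geodesic_metric M d" "Metric_space M d'" "geodesic_metric M d'"
    and "same_open_balls M d d' 1" "same_closed_balls M d d' 1"
  shows "same_open_balls M d d' (real n)"
proof (cases n)
  case 0
  then show ?thesis
    using Metric_space.nonneg[OF assms(1)] Metric_space.nonneg[OF assms(3)]
    unfolding same_open_balls_def by (metis of_nat_0 not_le)
next
  case (Suc m)
  then show ?thesis
    using same_open_balls_add[OF assms(1-4) _ _ assms(5) same_closed_balls_nat[OF assms(1-4,6)]]
    by simp
qed

lemma CAT0_dist_two_transfer:
  assumes M: "Metric_space M d" and C: "CAT0 M d"
    and M': "Metric_space M d'" and G': "geodesic_metric M d'"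
    and one: "same_closed_balls M d d' 1" and two: "same_closed_balls M d d' 2"
    and in_M: "x \<in> M" "y \<in> M" and dist: "d x y = 2"
  shows "d' x y = 2"
proof (rule ccontr)
  assume "d' x y \<noteq> 2"
  with two dist in_M have "d' x y < 2"
    unfolding same_closed_balls_def by force
  moreover have "0 < d' x y"
    using in_M dist Metric_space.mdist_pos_eq[OF M] Metric_space.mdist_pos_eq[OF M'] by force
  ultimately obtain z w where zw: "z \<in> M" "w \<in> M" "z \<noteq> w"
    "d' x z \<le> 1" "d' z y \<le> 1" "d' x w \<le> 1" "d' w y \<le> 1"
    using geodesic_two_points_in_unit_balls[OF G' in_M] by blast
  then have "d x z \<le> 1" "d z y \<le> 1" "d x w \<le> 1" "d w y \<le> 1"
    using one in_M unfolding same_closed_balls_def by blast+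
  moreover have "d x y \<le> d x z + d z y" "d x y \<le> d x w + d w y"
    using Metric_space.triangle[OF M] in_M zw by blast+
  ultimately have "z = w"
    using CAT0_between_unique[OF M C in_M zw(1,2)] dist by force
  with zw show False by blast
qed

lemma geodesically_complete_dist_one_transfer:
  assumes GC: "geodesically_complete M d" and M': "Metric_space M d'"
    and one: "same_closed_balls M d d' 1"
    and two: "\<forall>x\<in>M. \<forall>y\<in>M. d x y = 2 \<longrightarrow> d' x y = 2"
    and in_M: "x \<in> M" "y \<in> M" and dist: "d x y = 1"
  shows "d' x y = 1"
proof -
  obtain w where w: "w \<in> M" "d x w = 2" "d y w = 1"
    using geodesically_complete_extend[OF GC in_M, of 2] dist by auto
  then have "d' x w = 2" "d' y w \<le> 1" "d' x y \<le> 1"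
    using one two in_M dist unfolding same_closed_balls_def by (metis order_refl)+
  moreover have "d' x w \<le> d' x y + d' y w"
    using Metric_space.triangle[OF M'] in_M w(1) by blast
  ultimately show ?thesis by linarith
qed

theorem lemma1:
  fixes d d' :: "'a \<Rightarrow> 'a \<Rightarrow> real"
  assumes "Metric_space UNIV d"
    and "locally_compact_space (Metric_space.mtopology UNIV d)"
    and "geodesically_complete UNIV d"
    and "CAT0 UNIV d"
    and "connected_at_infinity UNIV d"
    and "Metric_space UNIV d'"
    and "locally_compact_space (Metric_space.mtopology UNIV d')"
    and "geodesically_complete UNIV d'"
    and "CAT0 UNIV d'"
    and "\<forall>x y. d x y \<le> 1 \<longleftrightarrow> d' x y \<le> 1"
  shows "\<forall>n::nat. \<forall>x y.
           (d x y \<le> real n \<longleftrightarrow> d' x y \<le> real n) \<and>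
           (d x y = real n \<longleftrightarrow> d' x y = real n) \<and>
           (d x y < real n \<longleftrightarrow> d' x y < real n)"
proof -
  note M = assms(1) and M' = assms(6)
  have G: "geodesic_metric UNIV d" and G': "geodesic_metric UNIV d'"
    using assms(4,9) by (simp_all add: CAT0_imp_geodesic_metric)
  have one: "same_closed_balls UNIV d d' 1"
    using assms(10) by (simp add: same_closed_balls_def)
  have closed_balls: "same_closed_balls UNIV d d' (real n)" for n
    using same_closed_balls_nat[OF M G M' G' one] .
  have two: "same_closed_balls UNIV d d' 2"
    using closed_balls[of 2] by simp
  note one' = same_closed_balls_sym[THEN iffD1, OF one]
    and two' = same_closed_balls_sym[THEN iffD1, OF two]
  have "same_spheres UNIV d d' 2"
    using CAT0_dist_two_transfer[OF M assms(4) M' G' one two]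
      CAT0_dist_two_transfer[OF M' assms(9) M G one' two']
    unfolding same_spheres_def by blast
  then have "same_spheres UNIV d d' 1"
    using geodesically_complete_dist_one_transfer[OF assms(3) M' one]
      geodesically_complete_dist_one_transfer[OF assms(8) M one']
    unfolding same_spheres_def by blast
  then have open_balls: "same_open_balls UNIV d d' (real n)" for n
    using same_open_balls_nat[OF M G M' G' same_open_balls_if_same_spheres[OF one] one] by blast
  have spheres: "same_spheres UNIV d d' (real n)" for n
    using same_spheres_if_same_balls[OF closed_balls open_balls] .
  show ?thesis
    using closed_balls open_balls spheres
    unfolding same_closed_balls_def same_open_balls_def same_spheres_def by blast
qed

end
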